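(* If $n\ge 1$, $k\ge 3$ and $t$ is a vertex of the $k$-Pell graph $\Pi_{n,k}$, then $$\deg(t)=|t|_0+2\sum_{i=1}^{k-1}|t|_i+\frac12|t|_k-r,$$ where $r$ is the number of maximal runs of the letter $k-1$ in $t$.
   Context: For an integer $k\ge 2$, a $k$-Pell string is a finite word over the alphabet $\{0,1,\ldots,k-1,kk\}$, i.e. a word over $\{0,1,\ldots,k\}$ in which every maximal run of the letter $k$ has even length. For $n\ge 0$, the $k$-Pell graph $\Pi_{n,k}$ has as vertices all $k$-Pell strings of length $n$, and two vertices are adjacent if one is obtained from the other either by replacing a single letter $i$ by $i+1$ (or vice versa) for some $i\in\{0,1,\ldots,k-2\}$, or by replacing one factor $(k-1)(k-1)$ by $kk$ (or vice versa), in such a way that the resulting string is again a $k$-Pell string. For a word $t$ and a letter $i$, $|t|_i$ denotes the number of occurrences of $i$ in $t$. *)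

theory Defs
  imports Complex_Main
begin

text \<open>k-Pell strings: words over the alphabet {0,...,k-1, kk}, encoded as nat lists
  (the block kk is the two letters k,k).\<close>
inductive pell_word :: "nat \<Rightarrow> nat list \<Rightarrow> bool" for k :: nat where
  Nil: "pell_word k []"
| Letter: "x < k \<Longrightarrow> pell_word k xs \<Longrightarrow> pell_word k (x # xs)"
| Block: "pell_word k xs \<Longrightarrow> pell_word k (k # k # xs)"

definition pell_vertices :: "nat \<Rightarrow> nat \<Rightarrow> nat list set" where
  "pell_vertices n k = {t. pell_word k t \<and> length t = n}"

definition pell_move :: "nat \<Rightarrow> nat list \<Rightarrow> nat list \<Rightarrow> bool" where
  "pell_move k u v \<longleftrightarrow>
     (\<exists>a b i j. u = a @ [i] @ b \<and> v = a @ [j] @ b \<and> i < k \<and> j < k \<and> (j = i + 1 \<or> i = j + 1))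
   \<or> (\<exists>a b. (u = a @ [k - 1, k - 1] @ b \<and> v = a @ [k, k] @ b)
          \<or> (u = a @ [k, k] @ b \<and> v = a @ [k - 1, k - 1] @ b))"

definition pell_adj :: "nat \<Rightarrow> nat \<Rightarrow> nat list \<Rightarrow> nat list \<Rightarrow> bool" where
  "pell_adj n k u v \<longleftrightarrow> u \<in> pell_vertices n k \<and> v \<in> pell_vertices n k \<and> pell_move k u v"

definition pell_degree :: "nat \<Rightarrow> nat \<Rightarrow> nat list \<Rightarrow> nat" where
  "pell_degree n k t = card {s. pell_adj n k t s}"

definition num_runs :: "nat \<Rightarrow> nat list \<Rightarrow> nat" where
  "num_runs a t = card {i. i < length t \<and> t ! i = a \<and> (i = 0 \<or> t ! (i - 1) \<noteq> a)}"

end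

theory Submission
  imports Defs
begin

(* Peeling off the first letter, or the first block kk, shows that
   a letter 0 contributes one neighbour, a letter in {1..k-2} two, a block kk one, and a letter
   k-1 one, plus one more when the next letter is also k-1. A maximal run of L letters k-1 thus
   contributes 2L - 1 neighbours instead of 2L, which is where the correction -r comes from. *)

lemma pell_move_Nil: "\<not> pell_move k [] v"
  by (simp add: pell_move_def)

lemma pell_move_letterI:
  "i < k \<Longrightarrow> j < k \<Longrightarrow> j = i + 1 \<or> i = j + 1 \<Longrightarrow>
   pell_move k (a @ i # b) (a @ j # b)"
  unfolding pell_move_def
  by (intro disjI1 exI[of _ a] exI[of _ b] exI[of _ i] exI[of _ j]) simp

lemma pell_move_block_upI: "pell_move k (a @ (k - 1) # (k - 1) # b) (a @ k # k # b)"
  unfolding pell_move_def by (intro disjI2 exI[of _ a] exI[of _ b] disjI1) simp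

lemma pell_move_block_downI: "pell_move k (a @ k # k # b) (a @ (k - 1) # (k - 1) # b)"
  unfolding pell_move_def by (intro disjI2 exI[of _ a] exI[of _ b] disjI2) simp

lemma pell_move_Cons_Cons: "pell_move k xs ys \<Longrightarrow> pell_move k (x # xs) (x # ys)"
  unfolding pell_move_def by (metis append_Cons)

lemma pell_move_Cons_iff:
  "pell_move k (x # xs) v \<longleftrightarrow>
     (\<exists>ys. v = x # ys \<and> pell_move k xs ys)
   \<or> (\<exists>y. v = y # xs \<and> x < k \<and> y < k \<and> (y = x + 1 \<or> x = y + 1))
   \<or> (\<exists>zs. x = k - 1 \<and> xs = (k - 1) # zs \<and> v = k # k # zs)
   \<or> (\<exists>zs. x = k \<and> xs = k # zs \<and> v = (k - 1) # (k - 1) # zs)"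
  (is "_ \<longleftrightarrow> ?rhs")
proof
  assume "pell_move k (x # xs) v"
  then consider
      (letter) a b i j where "x # xs = a @ i # b" "v = a @ j # b" "i < k" "j < k"
        "j = i + 1 \<or> i = j + 1"
    | (up) a b where "x # xs = a @ (k - 1) # (k - 1) # b" "v = a @ k # k # b"
    | (down) a b where "x # xs = a @ k # k # b" "v = a @ (k - 1) # (k - 1) # b"
    unfolding pell_move_def by auto
  then show ?rhs
  proof cases
    case letter
    then show ?thesis
    proof (cases a)
      case (Cons c a')
      with letter pell_move_letterI[of i k j a' b] show ?thesis by auto
    qed auto
  next
    case up
    then show ?thesis
    proof (cases a)
      case (Cons c a')
      with up pell_move_block_upI[of k a' b] show ?thesis by auto
    qed auto
  next
    case down
    then show ?thesis
    proof (cases a)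
      case (Cons c a')
      with down pell_move_block_downI[of k a' b] show ?thesis by auto
    qed auto
  qed
next
  assume ?rhs
  then show "pell_move k (x # xs) v"
    using pell_move_letterI[where a = "[]"] pell_move_block_upI[where a = "[]"]
      pell_move_block_downI[where a = "[]"]
    by (auto intro: pell_move_Cons_Cons)
qed

lemma pell_word_letters_le: "pell_word k t \<Longrightarrow> set t \<subseteq> {..k}"
  by (induction rule: pell_word.induct) auto

lemma pell_word_Cons_iff: "x < k \<Longrightarrow> pell_word k (x # xs) \<longleftrightarrow> pell_word k xs"
  by (auto elim: pell_word.cases intro: pell_word.intros)

lemma pell_word_block_iff: "pell_word k (k # k # xs) \<longleftrightarrow> pell_word k xs"
  by (auto elim: pell_word.cases intro: pell_word.intros)

lemma not_pell_word_single_k: "y \<noteq> k \<Longrightarrow> \<not> pell_word k (k # y # ys)"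
  by (auto elim: pell_word.cases)

definition pell_neighbours :: "nat \<Rightarrow> nat list \<Rightarrow> nat list set" where
  "pell_neighbours k t = {s. pell_word k s \<and> length s = length t \<and> pell_move k t s}"

lemma finite_pell_neighbours: "finite (pell_neighbours k t)"
proof (rule finite_subset)
  show "pell_neighbours k t \<subseteq> {s. set s \<subseteq> {..k} \<and> length s = length t}"
    using pell_word_letters_le by (auto simp: pell_neighbours_def)
qed (simp add: finite_lists_length_eq)

lemma pell_neighbours_Nil: "pell_neighbours k [] = {}"
  by (simp add: pell_neighbours_def pell_move_Nil)

lemma pell_neighbours_letter:
  assumes "x < k" "pell_word k xs"
  shows "pell_neighbours k (x # xs) =
           Cons x ` pell_neighbours k xs
         \<union> (\<lambda>y. y # xs) ` {y. y < k \<and> (y = x + 1 \<or> x = y + 1)}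
         \<union> {k # k # zs | zs. x = k - 1 \<and> xs = (k - 1) # zs}"
  using assms
  by (auto simp: pell_neighbours_def pell_move_Cons_iff pell_word_Cons_iff pell_word_block_iff)

lemma pell_neighbours_block:
  assumes "k \<ge> 1" "pell_word k zs"
  shows "pell_neighbours k (k # k # zs) =
           (\<lambda>s. k # k # s) ` pell_neighbours k zs \<union> {(k - 1) # (k - 1) # zs}"
  using assms
  by (auto simp: pell_neighbours_def pell_move_Cons_iff pell_word_Cons_iff pell_word_block_iff
      not_pell_word_single_k)


lemma card_adjacent_letters:
  fixes x k :: nat
  assumes "x < k" "k \<ge> 2"
  shows "card {y. y < k \<and> (y = x + 1 \<or> x = y + 1)} = (if x = 0 \<or> x = k - 1 then 1 else 2)"
proof -
  have "{y. y < k \<and> (y = x + 1 \<or> x = y + 1)} =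
          (if x = 0 then {1} else if x = k - 1 then {x - 1} else {x - 1, x + 1})"
    using assms by auto
  then show ?thesis
    using assms by simp
qed

lemma card_pell_neighbours_letter:
  assumes "k \<ge> 2" "x < k" "pell_word k xs"
  shows "card (pell_neighbours k (x # xs)) =
           card (pell_neighbours k xs) + (if x = 0 \<or> x = k - 1 then 1 else 2)
           + (if x = k - 1 \<and> xs \<noteq> [] \<and> hd xs = k - 1 then 1 else 0)"
proof -
  let ?A = "Cons x ` pell_neighbours k xs"
  let ?Y = "(\<lambda>y. y # xs) ` {y. y < k \<and> (y = x + 1 \<or> x = y + 1)}"
  let ?B = "{k # k # zs | zs. x = k - 1 \<and> xs = (k - 1) # zs}"
  have B_eq: "?B = (if x = k - 1 \<and> xs \<noteq> [] \<and> hd xs = k - 1 then {k # k # tl xs} else {})"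
    by (cases xs) auto
  then have "finite ?B"
    by simp
  have "card (?A \<union> ?Y \<union> ?B) = card ?A + card ?Y + card ?B"
  proof (subst card_Un_disjoint)
    show "card (?A \<union> ?Y) + card ?B = card ?A + card ?Y + card ?B"
      by (subst card_Un_disjoint) (auto simp: finite_pell_neighbours)
  qed (use assms(2) \<open>finite ?B\<close> in \<open>auto simp: finite_pell_neighbours\<close>)
  moreover have "card ?A = card (pell_neighbours k xs)"
    by (simp add: card_image)
  moreover have "card ?B = (if x = k - 1 \<and> xs \<noteq> [] \<and> hd xs = k - 1 then 1 else 0)"
    unfolding B_eq by simp
  moreover have "card ?Y = (if x = 0 \<or> x = k - 1 then 1 else 2)"
    using card_adjacent_letters[OF assms(2,1)] by (simp add: card_image inj_on_def)
  ultimately show ?thesis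
    by (simp add: pell_neighbours_letter[OF assms(2,3)])
qed

lemma card_pell_neighbours_block:
  assumes "k \<ge> 1" "pell_word k zs"
  shows "card (pell_neighbours k (k # k # zs)) = Suc (card (pell_neighbours k zs))"
proof -
  have "(k - 1) # (k - 1) # zs \<notin> (\<lambda>s. k # k # s) ` pell_neighbours k zs"
    using assms(1) by auto
  then show ?thesis
    by (simp add: pell_neighbours_block[OF assms] finite_pell_neighbours card_image inj_on_def)
qed

lemma num_runs_Nil: "num_runs a [] = 0"
  by (simp add: num_runs_def)

lemma num_runs_Cons:
  "num_runs a (x # xs) =
     (if x = a \<and> (xs = [] \<or> hd xs \<noteq> a) then Suc (num_runs a xs) else num_runs a xs)"
proof -
  define S where "S t = {i. i < length t \<and> t ! i = a \<and> (i = 0 \<or> t ! (i - 1) \<noteq> a)}" for t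
  have num_runs_S: "num_runs a t = card (S t)" for t
    by (simp add: num_runs_def S_def)
  have "finite (S t)" for t
    by (simp add: S_def)
  have Suc_in_S: "Suc i \<in> S (x # xs) \<longleftrightarrow> i \<in> S xs \<and> (i = 0 \<longrightarrow> x \<noteq> a)" for i
    by (cases i) (auto simp: S_def)
  have zero_in_S: "0 \<in> S xs \<longleftrightarrow> xs \<noteq> [] \<and> hd xs = a"
    by (cases xs) (auto simp: S_def)
  show ?thesis
  proof (cases "x = a")
    case False
    have "i \<in> S (x # xs) \<longleftrightarrow> i \<in> Suc ` S xs" for i
      using False Suc_in_S by (cases i) (auto simp: S_def)
    then have "S (x # xs) = Suc ` S xs"
      by blast
    then show ?thesis
      using False by (simp add: num_runs_S card_image)
  next
    case True
    have "i \<in> S (x # xs) \<longleftrightarrow> i \<in> insert 0 (Suc ` (S xs - {0}))" for i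
      using True Suc_in_S by (cases i) (auto simp: S_def)
    then have "S (x # xs) = insert 0 (Suc ` (S xs - {0}))"
      by blast
    then have "card (S (x # xs)) = Suc (card (S xs - {0}))"
      using \<open>finite (S xs)\<close> by (simp add: card_image)
    moreover have "card (S xs - {0}) = (if 0 \<in> S xs then card (S xs) - 1 else card (S xs))"
      by (simp add: card_Diff_singleton_if)
    moreover have "0 \<in> S xs \<Longrightarrow> card (S xs) \<noteq> 0"
      using \<open>finite (S xs)\<close> by auto
    ultimately show ?thesis
      using True zero_in_S by (auto simp: num_runs_S)
  qed
qed

lemma sum_count_list_Cons:
  assumes "finite A"
  shows "(\<Sum>i\<in>A. of_nat (count_list (x # xs) i) :: 'a :: semiring_1) =
           (\<Sum>i\<in>A. of_nat (count_list xs i)) + (if x \<in> A then 1 else 0)"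
proof -
  have "(\<Sum>i\<in>A. of_nat (count_list (x # xs) i) :: 'a) =
          (\<Sum>i\<in>A. of_nat (count_list xs i) + (if x = i then 1 else 0))"
    by (rule sum.cong) (simp_all add: add.commute)
  also have "\<dots> = (\<Sum>i\<in>A. of_nat (count_list xs i)) + (\<Sum>i\<in>A. if x = i then 1 else 0)"
    by (rule sum.distrib)
  finally show ?thesis
    using assms by (simp add: sum.delta)
qed

definition pell_degree_formula :: "nat \<Rightarrow> nat list \<Rightarrow> real" where
  "pell_degree_formula k t =
     real (count_list t 0) + 2 * (\<Sum>i=1..k-1. real (count_list t i))
     + real (count_list t k) / 2 - real (num_runs (k - 1) t)"

lemma pell_degree_formula_Nil: "pell_degree_formula k [] = 0"
  by (simp add: pell_degree_formula_def num_runs_Nil)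

lemma pell_degree_formula_letter:
  "x < k \<Longrightarrow> pell_degree_formula k (x # xs) =
     pell_degree_formula k xs + (if x = 0 then 1 else 2)
     - (if x = k - 1 \<and> (xs = [] \<or> hd xs \<noteq> k - 1) then 1 else 0)"
proof -
  assume "x < k"
  then have "(\<Sum>i=1..k-1. real (count_list (x # xs) i)) =
               (\<Sum>i=1..k-1. real (count_list xs i)) + (if x = 0 then 0 else 1)"
    using sum_count_list_Cons[of "{1..k-1}" x xs, where 'a = real] by simp
  with \<open>x < k\<close> show ?thesis
    unfolding pell_degree_formula_def num_runs_Cons by auto
qed

lemma pell_degree_formula_block:
  "k \<ge> 1 \<Longrightarrow> pell_degree_formula k (k # k # zs) = pell_degree_formula k zs + 1"
  using sum_count_list_Cons[of "{1..k-1}" k, where 'a = real]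
  by (simp add: pell_degree_formula_def num_runs_Cons)

lemma card_pell_neighbours_eq_formula:
  assumes "k \<ge> 2" "pell_word k t"
  shows "real (card (pell_neighbours k t)) = pell_degree_formula k t"
  using assms(2)
proof (induction rule: pell_word.induct)
  case Nil
  then show ?case
    by (simp add: pell_neighbours_Nil pell_degree_formula_Nil)
next
  case (Letter x xs)
  then show ?case
    using assms(1)
    by (cases "x = k - 1")
      (auto simp: card_pell_neighbours_letter pell_degree_formula_letter)
next
  case (Block zs)
  then show ?case
    using assms(1) by (simp add: card_pell_neighbours_block pell_degree_formula_block)
qed

lemma pell_degree_eq_card_neighbours:
  "t \<in> pell_vertices n k \<Longrightarrow> pell_degree n k t = card (pell_neighbours k t)"
  unfolding pell_degree_def pell_adj_def pell_vertices_def pell_neighbours_def by auto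

theorem proposition5p4:
  fixes n k :: nat and t :: "nat list"
  assumes "n \<ge> 1" and "k \<ge> 3" and "t \<in> pell_vertices n k"
  shows "real (pell_degree n k t) =
           real (count_list t 0) + 2 * (\<Sum>i=1..k-1. real (count_list t i))
           + real (count_list t k) / 2 - real (num_runs (k - 1) t)"
proof -
  have "pell_word k t"
    using assms(3) by (simp add: pell_vertices_def)
  with assms(2) have "real (card (pell_neighbours k t)) = pell_degree_formula k t"
    by (intro card_pell_neighbours_eq_formula) simp_all
  with assms(3) show ?thesis
    by (simp add: pell_degree_eq_card_neighbours pell_degree_formula_def)
qed

end
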